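(* Fix $p\in(\tfrac12,1)$ and let $\{B_n\}_{n\ge1}$ be a sequence with $B_n\in\{1,\dots,n\}$ and $\lim_{n\to\infty}B_n/n=q$ for some $q\in[0,1]$. Let $\sigma^n$ be the unique symmetric non-trivial Bayes-Nash equilibrium of $\Gamma(B_n,n)$, and let $x_n=\Pr_{\sigma^n}(\sum_{i=1}^n a_i\ge B_n\mid\omega=H,a_1=1)$ and $y_n=\Pr_{\sigma^n}(\sum_{i=1}^n a_i\ge B_n\mid\omega=L,a_1=1)$. Then $$\lim_{n\to\infty}\Big(x_n-\Pr_{\sigma^n}\big(\textstyle\sum_{i=1}^n a_i\ge B_n\mid\omega=H\big)\Big)=0\quad\text{and}\quad\lim_{n\to\infty}\Big(y_n-\Pr_{\sigma^n}\big(\textstyle\sum_{i=1}^n a_i\ge B_n\mid\omega=L\big)\Big)=0.$$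
   Context: The crowdfunding game $\Gamma(B,n)$ with parameter $p\in(\tfrac12,1)$: there are $n$ players and a threshold $B\in\{1,\dots,n\}$. A state $\omega\in\{H,L\}$ is drawn with probability $\tfrac12$ each. Conditional on $\omega$, each player $i$ independently receives a signal $s_i\in\{H,L\}$ with $\Pr(s_i=\omega\mid\omega)=p$. Players simultaneously choose $a_i\in\{0,1\}$. Player $i$'s payoff is $1$ if $a_i=1$, $\sum_j a_j\ge B$ and $\omega=H$; $-1$ if $a_i=1$, $\sum_j a_j\ge B$ and $\omega=L$; and $0$ otherwise. A strategy is a map $\sigma_i:\{H,L\}\to[0,1]$ giving the probability of action $1$ after each signal; Bayes-Nash equilibrium is defined as usual. A profile is non-trivial if $\Pr_\sigma(\sum_i a_i\ge B)>0$, and symmetric if all players use the same strategy. It is known that each $\Gamma(B,n)$ has a unique symmetric non-trivial Bayes-Nash equilibrium, in which each player plays $1$ with probability $1$ after signal $H$ and with some probability $\lambda\in[0,1)$ after signal $L$. *)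

theory Defs
  imports Complex_Main
begin

text \<open>Crowdfunding game Gamma(B,n) with signal precision p.
  States and signals are encoded as bool: True = H, False = L.
  Players are 0,...,n-1 (player 0 is "player 1" of the paper).
  A (possibly asymmetric) profile is sigma :: nat => bool => real,
  sigma i s = probability that player i plays action 1 after signal s.
  An action profile is represented by the set A of players choosing action 1.\<close>

definition sig_prob :: "real \<Rightarrow> bool \<Rightarrow> bool \<Rightarrow> real" where
  "sig_prob p w s = (if s = w then p else 1 - p)"

definition is_strategy :: "(bool \<Rightarrow> real) \<Rightarrow> bool" where
  "is_strategy f \<longleftrightarrow> (\<forall>s. 0 \<le> f s \<and> f s \<le> 1)"

definition act_prob :: "real \<Rightarrow> (bool \<Rightarrow> real) \<Rightarrow> bool \<Rightarrow> real" where
  "act_prob p f w = (\<Sum>s\<in>(UNIV::bool set). sig_prob p w s * f s)"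

text \<open>Probability of action profile A (set of players playing 1), conditional on state w.
  Signals are conditionally independent and each action depends only on the own signal.\<close>
definition prof_prob :: "real \<Rightarrow> nat \<Rightarrow> (nat \<Rightarrow> bool \<Rightarrow> real) \<Rightarrow> bool \<Rightarrow> nat set \<Rightarrow> real" where
  "prof_prob p n \<sigma> w A =
     (\<Prod>i<n. if i \<in> A then act_prob p (\<sigma> i) w else 1 - act_prob p (\<sigma> i) w)"

definition prob_given_state ::
  "real \<Rightarrow> nat \<Rightarrow> (nat \<Rightarrow> bool \<Rightarrow> real) \<Rightarrow> bool \<Rightarrow> (nat set \<Rightarrow> bool) \<Rightarrow> real" where
  "prob_given_state p n \<sigma> w E = (\<Sum>A\<in>Pow {..<n}. if E A then prof_prob p n \<sigma> w A else 0)"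

definition prob_event ::
  "real \<Rightarrow> nat \<Rightarrow> (nat \<Rightarrow> bool \<Rightarrow> real) \<Rightarrow> (nat set \<Rightarrow> bool) \<Rightarrow> real" where
  "prob_event p n \<sigma> E = (\<Sum>w\<in>(UNIV::bool set). 1/2 * prob_given_state p n \<sigma> w E)"

definition prob_given_state_first ::
  "real \<Rightarrow> nat \<Rightarrow> (nat \<Rightarrow> bool \<Rightarrow> real) \<Rightarrow> bool \<Rightarrow> (nat set \<Rightarrow> bool) \<Rightarrow> real" where
  "prob_given_state_first p n \<sigma> w E =
     prob_given_state p n \<sigma> w (\<lambda>A. E A \<and> 0 \<in> A) / prob_given_state p n \<sigma> w (\<lambda>A. 0 \<in> A)"

definition state_payoff :: "bool \<Rightarrow> real" where
  "state_payoff w = (if w then 1 else -1)"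

definition exp_payoff :: "real \<Rightarrow> nat \<Rightarrow> nat \<Rightarrow> (nat \<Rightarrow> bool \<Rightarrow> real) \<Rightarrow> nat \<Rightarrow> real" where
  "exp_payoff p B n \<sigma> i =
     (\<Sum>w\<in>(UNIV::bool set). 1/2 *
        (\<Sum>A\<in>Pow {..<n}. prof_prob p n \<sigma> w A *
            (if i \<in> A \<and> B \<le> card A then state_payoff w else 0)))"

definition is_BNE :: "real \<Rightarrow> nat \<Rightarrow> nat \<Rightarrow> (nat \<Rightarrow> bool \<Rightarrow> real) \<Rightarrow> bool" where
  "is_BNE p B n \<sigma> \<longleftrightarrow>
     (\<forall>i<n. is_strategy (\<sigma> i)) \<and>
     (\<forall>i<n. \<forall>\<tau>. is_strategy \<tau> \<longrightarrow> exp_payoff p B n (\<sigma>(i := \<tau>)) i \<le> exp_payoff p B n \<sigma> i)"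

definition is_symmetric :: "nat \<Rightarrow> (nat \<Rightarrow> bool \<Rightarrow> real) \<Rightarrow> bool" where
  "is_symmetric n \<sigma> \<longleftrightarrow> (\<forall>i<n. \<forall>j<n. \<sigma> i = \<sigma> j)"

definition is_nontrivial :: "real \<Rightarrow> nat \<Rightarrow> nat \<Rightarrow> (nat \<Rightarrow> bool \<Rightarrow> real) \<Rightarrow> bool" where
  "is_nontrivial p B n \<sigma> \<longleftrightarrow> prob_event p n \<sigma> (\<lambda>A. B \<le> card A) > 0"

end

theory Submission
  imports Defs
begin

text \<open>Conditional on the state, the players act independently, each playing 1 with the same
  probability \<open>a\<close>. Conditioning on \<open>a\<^sub>1 = 1\<close> only lowers the threshold the other \<open>n - 1\<close>
  players must reach from \<open>B\<close> to \<open>B - 1\<close>, so the difference of the two conditional success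
  probabilities is \<open>(1 - a) \<cdot> Pr(Bin(n - 1, a) = B - 1)\<close>. In equilibrium every player contributes
  after signal H, hence \<open>a \<ge> 1 - p\<close>, and a binomial point probability is
  \<open>O(1 / sqrt(a (1 - a) m))\<close>; together this gives the bound \<open>sqrt (8 / ((1 - p) (n - 1)))\<close>,
  uniformly in \<open>B\<close>.\<close>

section \<open>Independent events and binomial probabilities\<close>

definition indep_outcome_prob :: "'a set \<Rightarrow> ('a \<Rightarrow> real) \<Rightarrow> 'a set \<Rightarrow> real" where
  "indep_outcome_prob S q A = (\<Prod>i\<in>S. if i \<in> A then q i else 1 - q i)"

definition indep_event_prob :: "'a set \<Rightarrow> ('a \<Rightarrow> real) \<Rightarrow> ('a set \<Rightarrow> bool) \<Rightarrow> real" where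
  "indep_event_prob S q Q = (\<Sum>A\<in>Pow S. if Q A then indep_outcome_prob S q A else 0)"

definition at_least_prob :: "'a set \<Rightarrow> real \<Rightarrow> nat \<Rightarrow> real" where
  "at_least_prob S a k = indep_event_prob S (\<lambda>_. a) (\<lambda>A. k \<le> card A)"

definition binom_prob :: "nat \<Rightarrow> real \<Rightarrow> nat \<Rightarrow> real" where
  "binom_prob m a k = real (m choose k) * a ^ k * (1 - a) ^ (m - k)"

lemma indep_outcome_prob_nonneg:
  "(\<And>i. i \<in> S \<Longrightarrow> 0 \<le> q i \<and> q i \<le> 1) \<Longrightarrow> 0 \<le> indep_outcome_prob S q A"
  unfolding indep_outcome_prob_def by (rule prod_nonneg) auto

lemma indep_outcome_prob_const:
  assumes "finite S" "A \<subseteq> S"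
  shows "indep_outcome_prob S (\<lambda>_. a) A = a ^ card A * (1 - a) ^ (card S - card A)"
proof -
  have "indep_outcome_prob S (\<lambda>_. a) A = (\<Prod>i\<in>A. a) * (\<Prod>i\<in>S - A. 1 - a)"
    unfolding indep_outcome_prob_def using assms
    by (subst prod.If_cases) (auto simp: Int_absorb1 Diff_eq)
  then show ?thesis using assms by (simp add: card_Diff_subset finite_subset)
qed

lemma indep_event_prob_cong:
  "(\<And>i. i \<in> S \<Longrightarrow> q i = q' i) \<Longrightarrow> (\<And>A. A \<subseteq> S \<Longrightarrow> Q A = Q' A)
    \<Longrightarrow> indep_event_prob S q Q = indep_event_prob S q' Q'"
  unfolding indep_event_prob_def indep_outcome_prob_def
  by (intro sum.cong refl if_cong prod.cong) auto

lemma indep_event_prob_nonneg: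
  "(\<And>i. i \<in> S \<Longrightarrow> 0 \<le> q i \<and> q i \<le> 1) \<Longrightarrow> 0 \<le> indep_event_prob S q Q"
  unfolding indep_event_prob_def by (intro sum_nonneg) (auto intro: indep_outcome_prob_nonneg)

lemma indep_event_prob_eq_0: "(\<And>A. A \<subseteq> S \<Longrightarrow> \<not> Q A) \<Longrightarrow> indep_event_prob S q Q = 0"
  unfolding indep_event_prob_def by (rule sum.neutral) auto

lemma indep_event_prob_insert:
  assumes "finite S" "x \<notin> S"
  shows "indep_event_prob (insert x S) q Q
    = q x * indep_event_prob S q (\<lambda>A. Q (insert x A)) + (1 - q x) * indep_event_prob S q Q"
proof -
  let ?f = "\<lambda>A. if Q A then indep_outcome_prob (insert x S) q A else 0"
  have outcome: "indep_outcome_prob (insert x S) q A = (if x \<in> A then q x else 1 - q x) * indep_outcome_prob S q A"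
    and outcome_insert: "indep_outcome_prob S q (insert x A) = indep_outcome_prob S q A" for A
    using assms unfolding indep_outcome_prob_def by (auto intro!: prod.cong)
  have "indep_event_prob (insert x S) q Q = sum ?f (Pow S) + sum ?f (insert x ` Pow S)"
    unfolding indep_event_prob_def Pow_insert using assms by (intro sum.union_disjoint) auto
  also have "sum ?f (insert x ` Pow S) = (\<Sum>A\<in>Pow S. ?f (insert x A))"
    using assms by (subst sum.reindex) (auto simp: inj_on_def)
  also have "sum ?f (Pow S) = (1 - q x) * indep_event_prob S q Q"
    using assms unfolding indep_event_prob_def sum_distrib_left
    by (intro sum.cong) (auto simp: outcome)
  also have "(\<Sum>A\<in>Pow S. ?f (insert x A)) = q x * indep_event_prob S q (\<lambda>A. Q (insert x A))"
    unfolding indep_event_prob_def sum_distrib_left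
    by (intro sum.cong) (auto simp: outcome outcome_insert)
  finally show ?thesis by simp
qed

lemma indep_event_prob_True: "finite S \<Longrightarrow> indep_event_prob S q (\<lambda>_. True) = 1"
  by (induction S rule: finite_induct)
    (simp_all add: indep_event_prob_insert, simp add: indep_event_prob_def indep_outcome_prob_def)

lemma indep_event_prob_card_eq:
  assumes "finite S"
  shows "indep_event_prob S (\<lambda>_. a) (\<lambda>A. card A = k) = binom_prob (card S) a k"
proof -
  have "indep_event_prob S (\<lambda>_. a) (\<lambda>A. card A = k)
      = (\<Sum>A\<in>{A. A \<subseteq> S \<and> card A = k}. a ^ k * (1 - a) ^ (card S - k))"
    unfolding indep_event_prob_def using assms
    by (simp add: sum.inter_filter[symmetric] indep_outcome_prob_const Pow_def conj_commute)
  then show ?thesis using n_subsets[OF assms] by (simp add: binom_prob_def)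
qed

lemma binom_prob_nonneg: "0 \<le> a \<Longrightarrow> a \<le> 1 \<Longrightarrow> 0 \<le> binom_prob m a k"
  unfolding binom_prob_def by simp

lemma sum_binom_prob: "(\<Sum>k\<le>m. binom_prob m a k) = 1"
  using binomial_ring[of a "1 - a" m] by (simp add: binom_prob_def)

lemma binom_prob_le_1:
  assumes "0 \<le> a" "a \<le> 1"
  shows "binom_prob m a k \<le> 1"
proof (cases "k \<le> m")
  case True
  then have "binom_prob m a k \<le> (\<Sum>k\<le>m. binom_prob m a k)"
    using assms by (intro member_le_sum) (auto intro: binom_prob_nonneg)
  then show ?thesis by (simp add: sum_binom_prob)
qed (simp add: binom_prob_def binomial_eq_0)

lemma binom_prob_compl: "k \<le> m \<Longrightarrow> binom_prob m a k = binom_prob m (1 - a) (m - k)"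
  unfolding binom_prob_def by (simp add: binomial_symmetric[of k m, symmetric] mult.commute mult.left_commute)

lemma binom_prob_Suc:
  assumes "s < m"
  shows "binom_prob m a (Suc s) * ((real s + 1) * (1 - a)) = binom_prob m a s * ((real m - real s) * a)"
proof -
  have "(m choose Suc s) * Suc s = (m choose s) * (m - s)"
    using binomial_absorption[of s m] binomial_absorb_comp[of m s] by (simp add: mult.commute)
  then have choose: "real (m choose Suc s) * (real s + 1) = real (m choose s) * (real m - real s)"
    using assms by (metis of_nat_Suc add.commute of_nat_diff of_nat_mult less_imp_le)
  have "m - s = Suc (m - Suc s)" using assms by simp
  then show ?thesis unfolding binom_prob_def
    by (simp add: mult_ac flip: choose)
qed

lemma at_least_prob_0: "finite S \<Longrightarrow> at_least_prob S a 0 = 1"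
  unfolding at_least_prob_def by (simp add: indep_event_prob_True)

lemma at_least_prob_nonneg: "0 \<le> a \<Longrightarrow> a \<le> 1 \<Longrightarrow> 0 \<le> at_least_prob S a k"
  unfolding at_least_prob_def by (rule indep_event_prob_nonneg) simp

lemma at_least_prob_eq_binom_prob_plus:
  assumes "finite S"
  shows "at_least_prob S a k = binom_prob (card S) a k + at_least_prob S a (Suc k)"
proof -
  have "at_least_prob S a k = indep_event_prob S (\<lambda>_. a) (\<lambda>A. card A = k) + at_least_prob S a (Suc k)"
    unfolding at_least_prob_def indep_event_prob_def by (subst sum.distrib[symmetric]) (rule sum.cong, auto)
  then show ?thesis by (simp add: indep_event_prob_card_eq[OF assms])
qed

lemma at_least_prob_Suc_le:
  "finite S \<Longrightarrow> 0 \<le> a \<Longrightarrow> a \<le> 1 \<Longrightarrow> at_least_prob S a (Suc k) \<le> at_least_prob S a k"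
  using at_least_prob_eq_binom_prob_plus[of S a k] binom_prob_nonneg[of a "card S" k] by linarith

lemma at_least_prob_insert:
  assumes "finite S" "x \<notin> S"
  shows "at_least_prob (insert x S) a (Suc k) = a * at_least_prob S a k + (1 - a) * at_least_prob S a (Suc k)"
proof -
  have "indep_event_prob S (\<lambda>_. a) (\<lambda>A. Suc k \<le> card (insert x A)) = at_least_prob S a k"
    unfolding at_least_prob_def
  proof (rule indep_event_prob_cong)
    fix A assume "A \<subseteq> S"
    with assms have "finite A" "x \<notin> A" by (auto intro: finite_subset)
    then show "(Suc k \<le> card (insert x A)) = (k \<le> card A)" by simp
  qed simp
  then show ?thesis unfolding at_least_prob_def by (simp add: indep_event_prob_insert[OF assms])
qed

lemma at_least_prob_mono:
  assumes "finite S" "0 \<le> a'" "a' \<le> a" "a \<le> 1"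
  shows "at_least_prob S a' k \<le> at_least_prob S a k"
  using assms(1)
proof (induction S arbitrary: k rule: finite_induct)
  case empty
  then show ?case by (cases k) (simp_all add: at_least_prob_def indep_event_prob_def indep_outcome_prob_def)
next
  case (insert x S)
  show ?case
  proof (cases k)
    case 0
    then show ?thesis using insert by (simp add: at_least_prob_0)
  next
    case (Suc j)
    have "a' * at_least_prob S a' j + (1 - a') * at_least_prob S a' (Suc j)
        \<le> a * at_least_prob S a' j + (1 - a) * at_least_prob S a' (Suc j)"
    proof -
      have "0 \<le> (a - a') * (at_least_prob S a' j - at_least_prob S a' (Suc j))"
        using at_least_prob_Suc_le[OF insert(1), of a' j] assms by simp
      then show ?thesis by (simp add: algebra_simps)
    qed
    also have "\<dots> \<le> a * at_least_prob S a j + (1 - a) * at_least_prob S a (Suc j)"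
      using insert.IH assms by (intro add_mono mult_left_mono) auto
    finally show ?thesis using insert Suc by (simp add: at_least_prob_insert)
  qed
qed

section \<open>Concentration of binomial point probabilities\<close>

lemma binom_prob_Suc_ge:
  fixes J :: real
  assumes a: "0 < a" "a < 1" and s: "s < m" and J: "0 \<le> J" "J \<le> a * m"
    and s_le: "real s + 1 \<le> a * m + J"
  shows "binom_prob m a s * (1 - J / (a * (1 - a) * m)) \<le> binom_prob m a (Suc s)"
proof -
  define u where "u = real s + 1"
  define c where "c = 1 - J / (a * m)"
  have am: "0 < a * m" using a s by simp
  have "0 \<le> c" unfolding c_def using J am by simp
  with s_le have "u * c \<le> (a * m + J) * c" unfolding u_def by (rule mult_right_mono)
  also have "(a * m + J) * c = a * m - J * J / (a * m)"
    unfolding c_def using a s by (simp add: field_simps)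
  also have "\<dots> \<le> a * m" using am by simp
  finally have "u * c \<le> a * m" .
  moreover have "(1 - J / (a * (1 - a) * m)) * (u * (1 - a)) = u * c - u * a"
    unfolding c_def using a s by (simp add: field_simps)
  moreover have "(real m - real s) * a = a * m + a - u * a" unfolding u_def by (simp add: algebra_simps)
  ultimately have ratio: "(1 - J / (a * (1 - a) * m)) * (u * (1 - a)) \<le> (real m - real s) * a"
    using a by linarith
  have "binom_prob m a s * (1 - J / (a * (1 - a) * m)) * (u * (1 - a))
      \<le> binom_prob m a s * ((real m - real s) * a)"
    using mult_left_mono[OF ratio binom_prob_nonneg[of a m s]] a by (simp add: mult.assoc)
  also have "\<dots> = binom_prob m a (Suc s) * (u * (1 - a))"
    unfolding u_def using binom_prob_Suc[OF s] by simp
  finally show ?thesis using a unfolding u_def by (simp add: mult_le_cancel_right)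
qed

text \<open>Starting below the mean, each of the next \<open>J\<close> ratios of consecutive point probabilities is
  at least \<open>1 - J / V\<close> with \<open>V\<close> the variance, so by Bernoulli's inequality the \<open>J + 1\<close> point
  probabilities from \<open>k\<close> on are all at least half of the one at \<open>k\<close>.\<close>

lemma binom_prob_le_below_mean:
  assumes a: "0 < a" "a < 1" and k: "real k \<le> a * m" and J: "1 \<le> J"
    and JV: "real J ^ 2 \<le> a * (1 - a) * m / 2"
  shows "binom_prob m a k \<le> 2 / (real J + 1)"
proof -
  define V where "V = a * (1 - a) * m"
  define x where "x = real J / V"
  have "real J \<le> real J ^ 2" using J by (simp add: power2_eq_square)
  then have JV2: "real J \<le> V / 2" using JV V_def by linarith
  have V0: "0 < V" using J JV2 by simp
  have "(a * m) * ((1 - a) / 2) \<le> a * m" "((1 - a) * m) * (a / 2) \<le> (1 - a) * m"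
    using a by (intro mult_left_le; simp)+
  then have "V / 2 \<le> a * m" "V / 2 \<le> (1 - a) * m" unfolding V_def by (simp_all add: mult_ac)
  then have Jam: "real J \<le> a * m" and Jm: "real J \<le> (1 - a) * m" using JV2 by linarith+
  then have kJ: "k + J \<le> m" using k by (simp add: algebra_simps flip: of_nat_add of_nat_le_iff)
  have x: "0 \<le> x" "x \<le> 1/2" "real J * x \<le> 1/2"
    unfolding x_def using V0 JV2 JV V_def by (auto simp: field_simps power2_eq_square)
  have geometric: "binom_prob m a k * (1 - x) ^ j \<le> binom_prob m a (k + j)" if "j \<le> J" for j
    using that
  proof (induction j)
    case (Suc j)
    have "binom_prob m a k * (1 - x) ^ Suc j \<le> binom_prob m a (k + j) * (1 - x)"
      using Suc x by (simp add: mult.assoc[symmetric] mult_right_mono)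
    also have "\<dots> \<le> binom_prob m a (k + Suc j)"
      using binom_prob_Suc_ge[of a "k + j" m "real J"] a k Suc.prems kJ Jam
      unfolding x_def V_def by simp
    finally show ?case .
  qed simp
  have half: "binom_prob m a k / 2 \<le> binom_prob m a (k + j)" if "j \<le> J" for j
  proof -
    have "1 + real J * (- x) \<le> (1 - x) ^ J" using Bernoulli_inequality[of "- x" J] x by simp
    also have "\<dots> \<le> (1 - x) ^ j" using that x by (intro power_decreasing) auto
    finally have "binom_prob m a k * (1/2) \<le> binom_prob m a k * (1 - x) ^ j"
      using x binom_prob_nonneg[of a m k] a by (intro mult_left_mono) auto
    then show ?thesis using geometric[OF that] by simp
  qed
  have "(real J + 1) * (binom_prob m a k / 2) = (\<Sum>j\<le>J. binom_prob m a k / 2)" by simp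
  also have "\<dots> \<le> (\<Sum>j\<le>J. binom_prob m a (k + j))" using half by (intro sum_mono) auto
  also have "\<dots> = (\<Sum>i\<in>(+) k ` {..J}. binom_prob m a i)" by (simp add: sum.reindex)
  also have "\<dots> \<le> (\<Sum>i\<le>m. binom_prob m a i)"
    using kJ a by (intro sum_mono2) (auto intro: binom_prob_nonneg)
  finally show ?thesis by (simp add: sum_binom_prob field_simps)
qed

lemma binom_prob_le:
  assumes a: "0 < a" "a < 1" and JV: "real J ^ 2 \<le> a * (1 - a) * m / 2"
  shows "binom_prob m a k \<le> 2 / (real J + 1)"
proof (cases "J = 0 \<or> m < k")
  case True
  then show ?thesis using binom_prob_le_1[of a m k] a by (auto simp: binom_prob_def binomial_eq_0)
next
  case False
  then have J: "1 \<le> J" and k: "k \<le> m" by auto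
  show ?thesis
  proof (cases "real k \<le> a * m")
    case True
    from binom_prob_le_below_mean[OF a True J JV] show ?thesis .
  next
    case False
    then have "real (m - k) \<le> (1 - a) * m" using k by (simp add: of_nat_diff algebra_simps)
    moreover have "real J ^ 2 \<le> (1 - a) * (1 - (1 - a)) * m / 2" using JV by (simp add: mult_ac)
    ultimately show ?thesis
      using binom_prob_le_below_mean[of "1 - a" "m - k" m J] binom_prob_compl[OF k] a J by simp
  qed
qed

lemma compl_times_binom_prob_le:
  assumes a: "0 < a" "a \<le> 1" and m: "0 < m"
  shows "(1 - a) * binom_prob m a k \<le> sqrt (8 / (a * m))"
proof (cases "a = 1")
  case False
  then have a': "a < 1" using a by simp
  define t where "t = sqrt (a * (1 - a) * m / 2)"
  define J where "J = nat \<lfloor>t\<rfloor>"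
  have t: "0 < t" "t ^ 2 = a * (1 - a) * m / 2" unfolding t_def using a a' m by simp_all
  have "real J \<le> t" "t \<le> real J + 1" unfolding J_def using t by linarith+
  then have "real J ^ 2 \<le> a * (1 - a) * m / 2" using t by (metis of_nat_0_le_iff power_mono)
  then have "(1 - a) * binom_prob m a k \<le> (1 - a) * (2 / (real J + 1))"
    using binom_prob_le[OF a(1) a'] a' by (intro mult_left_mono) auto
  also have "\<dots> \<le> (1 - a) * (2 / t)"
    using a' t \<open>t \<le> real J + 1\<close> by (intro mult_left_mono divide_left_mono) auto
  also have "\<dots> \<le> sqrt (8 / (a * m))"
  proof (rule real_le_rsqrt)
    have "((1 - a) * (2 / t)) ^ 2 = 4 * (1 - a) ^ 2 / t ^ 2"
      unfolding power_mult_distrib power_divide by simp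
    also have "\<dots> = 8 * (1 - a) / (a * m)"
      unfolding t(2) using a a' m by (simp add: field_simps power2_eq_square)
    also have "\<dots> \<le> 8 / (a * m)" using a m by (simp add: divide_right_mono)
    finally show "((1 - a) * (2 / t)) ^ 2 \<le> 8 / (a * m)" .
  qed
  finally show ?thesis .
qed simp

section \<open>The symmetric equilibrium of the crowdfunding game\<close>

lemma act_prob_True: "act_prob p f True = p * f True + (1 - p) * f False"
  by (simp add: act_prob_def sig_prob_def UNIV_bool)

lemma act_prob_False: "act_prob p f False = (1 - p) * f True + p * f False"
  by (simp add: act_prob_def sig_prob_def UNIV_bool)

lemma act_prob_bounds:
  "is_strategy f \<Longrightarrow> 0 \<le> p \<Longrightarrow> p \<le> 1 \<Longrightarrow> 0 \<le> act_prob p f w \<and> act_prob p f w \<le> 1"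
  unfolding is_strategy_def
  by (cases w) (auto simp: act_prob_True act_prob_False intro!: convex_bound_le)

lemma prob_given_state_split_first:
  assumes n: "1 \<le> n" and others: "\<And>i. 1 \<le> i \<Longrightarrow> i < n \<Longrightarrow> \<rho> i = f"
  shows "prob_given_state p n \<rho> w Q
    = act_prob p (\<rho> 0) w * indep_event_prob {1..<n} (\<lambda>_. act_prob p f w) (\<lambda>A. Q (insert 0 A))
      + (1 - act_prob p (\<rho> 0) w) * indep_event_prob {1..<n} (\<lambda>_. act_prob p f w) Q"
proof -
  have players: "{..<n} = insert 0 {1..<n}" using n by auto
  have "prob_given_state p n \<rho> w Q = indep_event_prob (insert 0 {1..<n}) (\<lambda>i. act_prob p (\<rho> i) w) Q"
    unfolding prob_given_state_def indep_event_prob_def prof_prob_def indep_outcome_prob_def players ..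
  also have "\<dots> = act_prob p (\<rho> 0) w * indep_event_prob {1..<n} (\<lambda>i. act_prob p (\<rho> i) w) (\<lambda>A. Q (insert 0 A))
      + (1 - act_prob p (\<rho> 0) w) * indep_event_prob {1..<n} (\<lambda>i. act_prob p (\<rho> i) w) Q"
    by (simp add: indep_event_prob_insert)
  also have "indep_event_prob {1..<n} (\<lambda>i. act_prob p (\<rho> i) w) = indep_event_prob {1..<n} (\<lambda>_. act_prob p f w)"
    using others by (intro ext indep_event_prob_cong) auto
  finally show ?thesis .
qed

lemma subset_atLeast1_card_insert_0:
  assumes "A \<subseteq> {1..<n::nat}"
  shows "0 \<notin> A \<and> card (insert 0 A) = Suc (card A)"
proof -
  have "0 \<notin> A" using assms by auto
  moreover have "finite A" using assms by (rule finite_subset) simp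
  ultimately show ?thesis by simp
qed

context
  fixes p :: real and n :: nat and \<rho> :: "nat \<Rightarrow> bool \<Rightarrow> real" and f :: "bool \<Rightarrow> real"
  assumes n: "1 \<le> n" and others: "\<And>i. 1 \<le> i \<Longrightarrow> i < n \<Longrightarrow> \<rho> i = f"
begin

lemma prob_given_state_first_plays: "prob_given_state p n \<rho> w (\<lambda>A. 0 \<in> A) = act_prob p (\<rho> 0) w"
proof -
  have "indep_event_prob {1..<n} (\<lambda>_. act_prob p f w) (\<lambda>A. 0 \<in> A) = 0"
    using subset_atLeast1_card_insert_0 by (intro indep_event_prob_eq_0) blast
  then show ?thesis by (simp add: prob_given_state_split_first[OF n others] indep_event_prob_True)
qed

lemma prob_given_state_reach_and_first_plays:
  assumes "1 \<le> B"
  shows "prob_given_state p n \<rho> w (\<lambda>A. B \<le> card A \<and> 0 \<in> A)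
    = act_prob p (\<rho> 0) w * at_least_prob {1..<n} (act_prob p f w) (B - 1)"
proof -
  have "indep_event_prob {1..<n} (\<lambda>_. act_prob p f w) (\<lambda>A. B \<le> card (insert 0 A) \<and> 0 \<in> insert 0 A)
    = at_least_prob {1..<n} (act_prob p f w) (B - 1)"
    unfolding at_least_prob_def using assms subset_atLeast1_card_insert_0
    by (intro indep_event_prob_cong) auto
  then show ?thesis using subset_atLeast1_card_insert_0
    by (simp add: prob_given_state_split_first[OF n others] indep_event_prob_eq_0)
qed

end

lemma exp_payoff_first:
  "exp_payoff p B n \<sigma> 0 = (prob_given_state p n \<sigma> True (\<lambda>A. B \<le> card A \<and> 0 \<in> A)
    - prob_given_state p n \<sigma> False (\<lambda>A. B \<le> card A \<and> 0 \<in> A)) / 2"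
proof -
  have "(\<Sum>A\<in>Pow {..<n}. prof_prob p n \<sigma> w A * (if 0 \<in> A \<and> B \<le> card A then state_payoff w else 0))
     = state_payoff w * prob_given_state p n \<sigma> w (\<lambda>A. B \<le> card A \<and> 0 \<in> A)" for w
    unfolding prob_given_state_def sum_distrib_left by (intro sum.cong) auto
  then show ?thesis unfolding exp_payoff_def by (simp add: UNIV_bool state_payoff_def)
qed

context
  fixes p :: real and n B :: nat and \<sigma> :: "nat \<Rightarrow> bool \<Rightarrow> real"
  assumes n: "1 \<le> n" and B: "1 \<le> B" and sym: "is_symmetric n \<sigma>"
begin

lemma symmetric_others: "1 \<le> i \<Longrightarrow> i < n \<Longrightarrow> \<sigma> i = \<sigma> 0"
  using sym n unfolding is_symmetric_def by (metis less_le_trans zero_less_one)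

lemma prob_given_state_reach:
  "prob_given_state p n \<sigma> w (\<lambda>A. B \<le> card A)
    = act_prob p (\<sigma> 0) w * at_least_prob {1..<n} (act_prob p (\<sigma> 0) w) (B - 1)
      + (1 - act_prob p (\<sigma> 0) w) * at_least_prob {1..<n} (act_prob p (\<sigma> 0) w) B"
proof -
  have "indep_event_prob {1..<n} (\<lambda>_. act_prob p (\<sigma> 0) w) (\<lambda>A. B \<le> card (insert 0 A))
    = at_least_prob {1..<n} (act_prob p (\<sigma> 0) w) (B - 1)"
    unfolding at_least_prob_def using B subset_atLeast1_card_insert_0
    by (intro indep_event_prob_cong) auto
  then show ?thesis
    by (simp add: prob_given_state_split_first[OF n symmetric_others] at_least_prob_def)
qed

lemma prob_given_state_first_reach:
  "0 < act_prob p (\<sigma> 0) w \<Longrightarrow>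
    prob_given_state_first p n \<sigma> w (\<lambda>A. B \<le> card A) = at_least_prob {1..<n} (act_prob p (\<sigma> 0) w) (B - 1)"
  unfolding prob_given_state_first_def
  by (simp add: prob_given_state_reach_and_first_plays[OF n symmetric_others B]
      prob_given_state_first_plays[OF n symmetric_others])

lemma exp_payoff_deviation:
  "exp_payoff p B n (\<sigma>(0 := \<tau>)) 0
    = (act_prob p \<tau> True * at_least_prob {1..<n} (act_prob p (\<sigma> 0) True) (B - 1)
      - act_prob p \<tau> False * at_least_prob {1..<n} (act_prob p (\<sigma> 0) False) (B - 1)) / 2"
  using prob_given_state_reach_and_first_plays[OF n _ B, of "\<sigma>(0 := \<tau>)" "\<sigma> 0" p]
  by (simp add: exp_payoff_first symmetric_others)

text \<open>Twice the payoff of a deviation \<open>\<tau>\<close> of player 1 is \<open>\<tau> True * UT + \<tau> False * UF\<close>.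
  If \<open>\<sigma> 0 True < 1\<close>, optimality forces \<open>UT \<le> 0\<close>, hence \<open>UF < UT \<le> 0\<close> and \<open>\<sigma> 0 False = 0\<close>;
  but then the others contribute more in state H than in state L, which makes \<open>UT > 0\<close>.\<close>

lemma BNE_contributes_after_high_signal:
  assumes hp: "1/2 < p" "p < 1" and nt: "is_nontrivial p B n \<sigma>" and bne: "is_BNE p B n \<sigma>"
  shows "\<sigma> 0 True = 1"
proof (rule ccontr)
  assume t_ne_1: "\<sigma> 0 True \<noteq> 1"
  define a where "a w = act_prob p (\<sigma> 0) w" for w
  define G where "G w = at_least_prob {1..<n} (a w) (B - 1)" for w
  define UT where "UT = p * G True - (1 - p) * G False"
  define UF where "UF = (1 - p) * G True - p * G False"
  have str: "is_strategy (\<sigma> 0)" using bne n unfolding is_BNE_def by auto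
  then have t: "0 \<le> \<sigma> 0 True" "\<sigma> 0 True < 1" and u: "0 \<le> \<sigma> 0 False" "\<sigma> 0 False \<le> 1"
    using t_ne_1 unfolding is_strategy_def by (auto simp: less_le)
  have a: "0 \<le> a w" "a w \<le> 1" for w using act_prob_bounds[OF str] hp unfolding a_def by auto
  have payoff: "2 * exp_payoff p B n (\<sigma>(0 := \<tau>)) 0 = \<tau> True * UT + \<tau> False * UF" for \<tau>
  proof -
    have "2 * exp_payoff p B n (\<sigma>(0 := \<tau>)) 0 = act_prob p \<tau> True * G True - act_prob p \<tau> False * G False"
      unfolding exp_payoff_deviation G_def a_def by simp
    also have "\<dots> = \<tau> True * UT + \<tau> False * UF"
      unfolding UT_def UF_def act_prob_True act_prob_False by (simp add: algebra_simps)
    finally show ?thesis .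
  qed
  have no_gain: "\<tau> True * UT + \<tau> False * UF \<le> \<sigma> 0 True * UT + \<sigma> 0 False * UF"
    if "is_strategy \<tau>" for \<tau>
  proof -
    have "exp_payoff p B n (\<sigma>(0 := \<tau>)) 0 \<le> exp_payoff p B n (\<sigma>(0 := \<sigma> 0)) 0"
      using bne n that unfolding is_BNE_def by (metis fun_upd_triv less_le_trans zero_less_one)
    then show ?thesis using payoff[of \<tau>] payoff[of "\<sigma> 0"] by linarith
  qed
  have reach_le: "prob_given_state p n \<sigma> w (\<lambda>A. B \<le> card A) \<le> G w" for w
  proof -
    have "at_least_prob {1..<n} (a w) B \<le> G w"
      unfolding G_def using at_least_prob_Suc_le[of "{1..<n}" "a w" "B - 1"] a B by simp
    then have "a w * G w + (1 - a w) * at_least_prob {1..<n} (a w) B \<le> a w * G w + (1 - a w) * G w"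
      using a by (intro add_left_mono mult_left_mono) auto
    then show ?thesis unfolding prob_given_state_reach G_def a_def by (simp add: algebra_simps)
  qed
  have G_pos: "0 < G True + G False"
    using nt reach_le[of True] reach_le[of False]
    unfolding is_nontrivial_def prob_event_def by (simp add: UNIV_bool)
  have "UT + \<sigma> 0 False * UF \<le> \<sigma> 0 True * UT + \<sigma> 0 False * UF"
    using no_gain[of "\<lambda>s. if s then 1 else \<sigma> 0 False"] u unfolding is_strategy_def by simp
  then have "(1 - \<sigma> 0 True) * UT \<le> 0" by (simp add: algebra_simps)
  then have UT: "UT \<le> 0" using t by (simp add: mult_le_0_iff)
  have "UT - UF = (2 * p - 1) * (G True + G False)" unfolding UT_def UF_def by (simp add: algebra_simps)
  moreover have "0 < (2 * p - 1) * (G True + G False)" using G_pos hp by simp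
  ultimately have UF: "UF < 0" using UT by linarith
  have "\<sigma> 0 True * UT \<le> \<sigma> 0 True * UT + \<sigma> 0 False * UF"
    using no_gain[of "\<lambda>s. if s then \<sigma> 0 True else 0"] t unfolding is_strategy_def by simp
  then have u0: "\<sigma> 0 False = 0" using u UF by (simp add: zero_le_mult_iff)
  have "a False \<le> a True"
    unfolding a_def act_prob_True act_prob_False u0 using hp t by (simp add: mult_right_mono)
  then have "G False \<le> G True" unfolding G_def using a by (intro at_least_prob_mono) auto
  then have "0 < (2 * p - 1) * G True" using G_pos hp by simp
  also have "(2 * p - 1) * G True \<le> UT"
  proof -
    have "(1 - p) * G False \<le> (1 - p) * G True"
      using \<open>G False \<le> G True\<close> hp by (intro mult_left_mono) auto
    then show ?thesis unfolding UT_def by (simp add: algebra_simps)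
  qed
  finally show False using UT by simp
qed

lemma prob_given_state_first_minus_reach:
  assumes "0 < act_prob p (\<sigma> 0) w"
  shows "prob_given_state_first p n \<sigma> w (\<lambda>A. B \<le> card A) - prob_given_state p n \<sigma> w (\<lambda>A. B \<le> card A)
    = (1 - act_prob p (\<sigma> 0) w) * binom_prob (n - 1) (act_prob p (\<sigma> 0) w) (B - 1)"
  using at_least_prob_eq_binom_prob_plus[of "{1..<n}" "act_prob p (\<sigma> 0) w" "B - 1"] B
  by (simp add: prob_given_state_first_reach[OF assms] prob_given_state_reach algebra_simps)

end

lemma prob_given_state_first_minus_reach_bounds:
  fixes w :: bool
  assumes hp: "1/2 < p" "p < 1" and n: "2 \<le> n" and B: "1 \<le> B"
    and sym: "is_symmetric n \<sigma>" and nt: "is_nontrivial p B n \<sigma>" and bne: "is_BNE p B n \<sigma>"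
  defines "D \<equiv> prob_given_state_first p n \<sigma> w (\<lambda>A. B \<le> card A) - prob_given_state p n \<sigma> w (\<lambda>A. B \<le> card A)"
  shows "0 \<le> D \<and> D \<le> sqrt (8 / ((1 - p) * real (n - 1)))"
proof -
  define a where "a = act_prob p (\<sigma> 0) w"
  have n1: "1 \<le> n" using n by simp
  have "is_strategy (\<sigma> 0)" using bne n unfolding is_BNE_def by auto
  then have a_le: "a \<le> 1" and u: "0 \<le> \<sigma> 0 False"
    using act_prob_bounds[of "\<sigma> 0" p w] hp unfolding a_def is_strategy_def by auto
  have "0 \<le> (1 - p) * \<sigma> 0 False" "0 \<le> p * \<sigma> 0 False" using u hp by simp_all
  then have "1 - p \<le> a"
    using BNE_contributes_after_high_signal[OF n1 B sym hp nt bne] hp unfolding a_def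
    by (cases w) (auto simp: act_prob_True act_prob_False)
  then have a: "0 < a" "1 - p \<le> a" using hp by auto
  have D: "D = (1 - a) * binom_prob (n - 1) a (B - 1)"
    unfolding D_def a_def using prob_given_state_first_minus_reach[OF n1 B sym] a unfolding a_def by simp
  have "0 \<le> D" unfolding D using a a_le by (simp add: binom_prob_nonneg)
  moreover have "D \<le> sqrt (8 / (a * real (n - 1)))"
    unfolding D using compl_times_binom_prob_le[of a "n - 1"] a a_le n by simp
  moreover have "\<dots> \<le> sqrt (8 / ((1 - p) * real (n - 1)))"
  proof -
    have pos: "0 < (1 - p) * real (n - 1)" using hp n by simp
    have le: "(1 - p) * real (n - 1) \<le> a * real (n - 1)" using a by (simp add: mult_right_mono)
    have "8 / (a * real (n - 1)) \<le> 8 / ((1 - p) * real (n - 1))"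
      using divide_left_mono[OF le _ mult_pos_pos[OF order_less_le_trans[OF pos le] pos]] by simp
    then show ?thesis by (rule real_sqrt_le_mono)
  qed
  ultimately show ?thesis by linarith
qed

lemma prob_given_state_first_minus_reach_tendsto_0:
  assumes hp: "1/2 < p" "p < 1" and hB: "\<forall>n\<ge>1. 1 \<le> B n"
    and heq: "\<forall>n\<ge>1. is_symmetric n (\<sigma> n) \<and> is_nontrivial p (B n) n (\<sigma> n) \<and> is_BNE p (B n) n (\<sigma> n)"
  shows "(\<lambda>n. prob_given_state_first p n (\<sigma> n) w (\<lambda>A. B n \<le> card A)
    - prob_given_state p n (\<sigma> n) w (\<lambda>A. B n \<le> card A)) \<longlonglongrightarrow> 0"
proof -
  define D where "D n = prob_given_state_first p n (\<sigma> n) w (\<lambda>A. B n \<le> card A)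
    - prob_given_state p n (\<sigma> n) w (\<lambda>A. B n \<le> card A)" for n
  have bounds: "\<forall>\<^sub>F n in sequentially. 0 \<le> D n \<and> D n \<le> sqrt (8 / ((1 - p) * real (n - 1)))"
    using eventually_ge_at_top[of 2]
  proof eventually_elim
    case (elim n)
    then show ?case unfolding D_def using prob_given_state_first_minus_reach_bounds[OF hp elim] hB heq by simp
  qed
  have "(\<lambda>n. 8 / ((1 - p) * real (Suc n - 1))) \<longlonglongrightarrow> 0"
    using lim_const_over_n[of "8 / (1 - p)"] by simp
  then have "(\<lambda>n. 8 / ((1 - p) * real (n - 1))) \<longlonglongrightarrow> 0" by (rule LIMSEQ_imp_Suc)
  then have "(\<lambda>n. sqrt (8 / ((1 - p) * real (n - 1)))) \<longlonglongrightarrow> sqrt 0" by (rule tendsto_real_sqrt)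
  then have upper: "(\<lambda>n. sqrt (8 / ((1 - p) * real (n - 1)))) \<longlonglongrightarrow> 0" by simp
  have "\<forall>\<^sub>F n in sequentially. 0 \<le> D n" "\<forall>\<^sub>F n in sequentially. D n \<le> sqrt (8 / ((1 - p) * real (n - 1)))"
    using bounds by (simp_all add: eventually_conj_iff)
  from tendsto_sandwich[OF this tendsto_const upper] have "D \<longlonglongrightarrow> 0" .
  then show ?thesis unfolding D_def .
qed

theorem lemma3:
  fixes p q :: real and B :: "nat \<Rightarrow> nat" and \<sigma> :: "nat \<Rightarrow> nat \<Rightarrow> bool \<Rightarrow> real"
  assumes hp: "1/2 < p" "p < 1"
    and hB: "\<forall>n\<ge>1. 1 \<le> B n \<and> B n \<le> n"
    and hq: "0 \<le> q" "q \<le> 1"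
    and hlim: "(\<lambda>n. real (B n) / real n) \<longlonglongrightarrow> q"
    and heq: "\<forall>n\<ge>1. is_symmetric n (\<sigma> n) \<and> is_nontrivial p (B n) n (\<sigma> n) \<and> is_BNE p (B n) n (\<sigma> n)"
  shows "(\<lambda>n. prob_given_state_first p n (\<sigma> n) True (\<lambda>A. B n \<le> card A)
              - prob_given_state p n (\<sigma> n) True (\<lambda>A. B n \<le> card A)) \<longlonglongrightarrow> 0
       \<and> (\<lambda>n. prob_given_state_first p n (\<sigma> n) False (\<lambda>A. B n \<le> card A)
              - prob_given_state p n (\<sigma> n) False (\<lambda>A. B n \<le> card A)) \<longlonglongrightarrow> 0"
  using prob_given_state_first_minus_reach_tendsto_0[OF hp _ heq] hB by simp

end
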